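(* Let $K$ be a field, $I\subset R=K[x_1,\ldots,x_n]$ a monomial ideal and $h$ a monomial in $R$. Then $I$ has the copersistence property if and only if $hI$ has the copersistence property.
   Context: An ideal $I$ in a commutative Noetherian ring $R$ has the copersistence property if $\mathrm{Ass}_R(R/I^k)\supseteq\mathrm{Ass}_R(R/I^{k+1})$ for all $k\ge1$. *)

theory Defs
  imports Main "HOL-Library.Poly_Mapping"
begin

text \<open>Polynomial ring K[x_v : v in 'v] with finitely many variables ('v finite):
  polynomials are finitely supported maps from exponent vectors to coefficients.\<close>
type_synonym ('v, 'k) mpoly = "('v \<Rightarrow>\<^sub>0 nat) \<Rightarrow>\<^sub>0 'k"

definition is_ideal :: "'a::comm_ring_1 set \<Rightarrow> bool" where
  "is_ideal I \<longleftrightarrow> 0 \<in> I \<and> (\<forall>a\<in>I. \<forall>b\<in>I. a + b \<in> I) \<and> (\<forall>r. \<forall>a\<in>I. r * a \<in> I)"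

definition ideal_gen :: "'a::comm_ring_1 set \<Rightarrow> 'a set" where
  "ideal_gen S = \<Inter> {J. is_ideal J \<and> S \<subseteq> J}"

definition prime_ideal :: "'a::comm_ring_1 set \<Rightarrow> bool" where
  "prime_ideal P \<longleftrightarrow> is_ideal P \<and> P \<noteq> UNIV \<and> (\<forall>a b. a * b \<in> P \<longrightarrow> a \<in> P \<or> b \<in> P)"

definition ideal_prod :: "'a::comm_ring_1 set \<Rightarrow> 'a set \<Rightarrow> 'a set" where
  "ideal_prod I J = ideal_gen {a * b | a b. a \<in> I \<and> b \<in> J}"

primrec ideal_pow :: "'a::comm_ring_1 set \<Rightarrow> nat \<Rightarrow> 'a set" where
  "ideal_pow I 0 = UNIV"
| "ideal_pow I (Suc k) = ideal_prod I (ideal_pow I k)"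

text \<open>Ass_R(R/I): primes of the form (I : f) = Ann_R(f + I).\<close>
definition Ass_quot :: "'a::comm_ring_1 set \<Rightarrow> 'a set set" where
  "Ass_quot I = {P. prime_ideal P \<and> (\<exists>f. P = {g. g * f \<in> I})}"

definition copersistence :: "'a::comm_ring_1 set \<Rightarrow> bool" where
  "copersistence I \<longleftrightarrow> (\<forall>k\<ge>1. Ass_quot (ideal_pow I (Suc k)) \<subseteq> Ass_quot (ideal_pow I k))"

definition monomial_of :: "('v \<Rightarrow>\<^sub>0 nat) \<Rightarrow> ('v, 'k::comm_ring_1) mpoly" where
  "monomial_of a = Poly_Mapping.single a 1"

definition is_monomial :: "('v, 'k::comm_ring_1) mpoly \<Rightarrow> bool" where
  "is_monomial h \<longleftrightarrow> (\<exists>a. h = monomial_of a)"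

definition monomial_ideal :: "('v, 'k::comm_ring_1) mpoly set \<Rightarrow> bool" where
  "monomial_ideal I \<longleftrightarrow> (\<exists>S. S \<subseteq> {m. is_monomial m} \<and> I = ideal_gen S)"

text \<open>hI as the ideal generated by h times elements of I (equals the set {h*f | f in I}).\<close>
definition elt_times_ideal :: "'a::comm_ring_1 \<Rightarrow> 'a set \<Rightarrow> 'a set" where
  "elt_times_ideal h I = ideal_gen {h * f | f. f \<in> I}"

end

theory Submission
  imports Defs
begin

text \<open>Multiplication by a monomial h is injective, so (hI)^k = h^k I^k, and an associated prime
  of h^k I^k is associated either to I^k or to the principal ideal (h^k); the latter are the
  variable ideals (x_v) with x_v dividing h. Conversely every nonzero ideal J inside (x_v) has
  (x_v) as an associated prime: (x_v) = (J : f) for any x_v f in J of least x_v-adic order.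
  Hence, for I nonzero and k >= 1,
    Ass((hI)^k) = Ass(I^k) \<union> {(x_v) | x_v divides h},
  with the second set independent of k. Copersistence thus passes from I to hI at once, and
  back because (x_v) in Ass(I^(k+1)) forces I \<subseteq> (x_v) and hence (x_v) in Ass(I^k). That I is a
  monomial ideal is used only through its being an ideal.

  Additivity of the x_v-adic order on products comes from a leading-term argument for a
  monomial order that compares the exponent of x_v first.\<close>

lemma is_ideal_ideal_gen: "is_ideal (ideal_gen S)"
  unfolding is_ideal_def ideal_gen_def by blast

lemma subset_ideal_gen: "S \<subseteq> ideal_gen S"
  unfolding ideal_gen_def by blast

lemma ideal_gen_least: "is_ideal J \<Longrightarrow> S \<subseteq> J \<Longrightarrow> ideal_gen S \<subseteq> J"
  unfolding ideal_gen_def by blast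

lemma ideal_gen_eq_self: "is_ideal J \<Longrightarrow> ideal_gen J = J"
  using ideal_gen_least subset_ideal_gen by blast

lemma is_ideal_ideal_pow: "is_ideal (ideal_pow I k)"
  by (cases k) (simp add: is_ideal_def, simp add: ideal_prod_def is_ideal_ideal_gen)

lemma is_ideal_image_mult:
  fixes c :: "'a::comm_ring_1"
  assumes "is_ideal J"
  shows "is_ideal ((*) c ` J)"
  unfolding is_ideal_def
proof (intro conjI ballI allI)
  show "0 \<in> (*) c ` J"
    using assms unfolding is_ideal_def by (metis image_eqI mult_zero_right)
next
  fix x y
  assume "x \<in> (*) c ` J" "y \<in> (*) c ` J"
  then obtain a b where "a \<in> J" "b \<in> J" "x = c * a" "y = c * b"
    by blast
  then show "x + y \<in> (*) c ` J"
    using assms unfolding is_ideal_def by (metis distrib_left image_eqI)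
next
  fix r x
  assume "x \<in> (*) c ` J"
  then obtain a where "a \<in> J" "x = c * a"
    by blast
  then show "r * x \<in> (*) c ` J"
    using assms unfolding is_ideal_def by (metis mult.left_commute image_eqI)
qed

lemma ideal_gen_image_mult:
  fixes c :: "'a::comm_ring_1"
  shows "ideal_gen ((*) c ` S) = (*) c ` ideal_gen S"
proof
  show "ideal_gen ((*) c ` S) \<subseteq> (*) c ` ideal_gen S"
    by (intro ideal_gen_least is_ideal_image_mult is_ideal_ideal_gen image_mono subset_ideal_gen)
  define T where "T = {x. c * x \<in> ideal_gen ((*) c ` S)}"
  have "is_ideal T"
    using is_ideal_ideal_gen[of "(*) c ` S"]
    unfolding is_ideal_def T_def by (simp add: distrib_left mult.left_commute)
  moreover have "S \<subseteq> T"
    unfolding T_def using subset_ideal_gen by blast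
  ultimately have "ideal_gen S \<subseteq> T"
    by (rule ideal_gen_least)
  then show "(*) c ` ideal_gen S \<subseteq> ideal_gen ((*) c ` S)"
    unfolding T_def by blast
qed

lemma elt_times_ideal_eq_image:
  fixes h :: "'a::comm_ring_1"
  assumes "is_ideal I"
  shows "elt_times_ideal h I = (*) h ` I"
proof -
  have "{h * f |f. f \<in> I} = (*) h ` I"
    by auto
  then show ?thesis
    unfolding elt_times_ideal_def by (simp add: ideal_gen_image_mult ideal_gen_eq_self assms)
qed

lemma mult_set_image_mult:
  fixes c :: "'a::comm_ring_1"
  shows "{a * b |a b. a \<in> (*) c ` I \<and> b \<in> (*) d ` J} = (*) (c * d) ` {a * b |a b. a \<in> I \<and> b \<in> J}"
proof -
  have prod: "c * x * (d * y) = c * d * (x * y)" for x y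
    by (simp add: mult_ac)
  show ?thesis
  proof (intro set_eqI iffI)
    fix z
    assume "z \<in> {a * b |a b. a \<in> (*) c ` I \<and> b \<in> (*) d ` J}"
    then obtain x y where "x \<in> I" "y \<in> J" "z = c * x * (d * y)"
      by blast
    then show "z \<in> (*) (c * d) ` {a * b |a b. a \<in> I \<and> b \<in> J}"
      unfolding prod by blast
  next
    fix z
    assume "z \<in> (*) (c * d) ` {a * b |a b. a \<in> I \<and> b \<in> J}"
    then obtain x y where "x \<in> I" "y \<in> J" "z = c * x * (d * y)"
      unfolding prod by blast
    then show "z \<in> {a * b |a b. a \<in> (*) c ` I \<and> b \<in> (*) d ` J}"
      by blast
  qed
qed

lemma ideal_pow_image_mult:
  fixes c :: "'a::comm_ring_1"
  shows "ideal_pow ((*) c ` I) k = (*) (c ^ k) ` ideal_pow I k"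
  by (induction k) (simp_all add: ideal_prod_def mult_set_image_mult ideal_gen_image_mult)

lemma power_in_ideal_pow:
  assumes "u \<in> I"
  shows "u ^ k \<in> ideal_pow I k"
proof (induction k)
  case (Suc k)
  then have "u ^ Suc k \<in> {a * b |a b. a \<in> I \<and> b \<in> ideal_pow I k}"
    using assms by auto
  then show ?case
    using subset_ideal_gen by (fastforce simp: ideal_prod_def)
qed simp

lemma ideal_pow_Suc_subset:
  assumes "is_ideal I"
  shows "ideal_pow I (Suc k) \<subseteq> I"
proof -
  have "{a * b |a b. a \<in> I \<and> b \<in> ideal_pow I k} \<subseteq> I"
    using assms unfolding is_ideal_def by auto (metis mult.commute)
  then show ?thesis
    by (simp add: ideal_prod_def ideal_gen_least assms)
qed

lemma one_notin_prime_ideal: "prime_ideal P \<Longrightarrow> 1 \<notin> P"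
  unfolding prime_ideal_def is_ideal_def by (metis UNIV_eq_I mult.right_neutral)

lemma power_in_prime_ideal: "prime_ideal P \<Longrightarrow> x ^ n \<in> P \<Longrightarrow> x \<in> P"
  by (induction n) (auto simp: one_notin_prime_ideal prime_ideal_def)

lemma subset_if_in_Ass_quot: "is_ideal J \<Longrightarrow> P \<in> Ass_quot J \<Longrightarrow> J \<subseteq> P"
  unfolding Ass_quot_def is_ideal_def by (auto simp: mult.commute)

lemma subset_if_in_Ass_quot_ideal_pow:
  assumes "is_ideal I" "P \<in> Ass_quot (ideal_pow I k)" "0 < k"
  shows "I \<subseteq> P"
proof
  fix y
  assume "y \<in> I"
  then have "y ^ k \<in> P"
    using power_in_ideal_pow subset_if_in_Ass_quot[OF is_ideal_ideal_pow assms(2)] by blast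
  then show "y \<in> P"
    using assms(2) power_in_prime_ideal unfolding Ass_quot_def by blast
qed

lemma Ass_quot_subset_image_mult:
  fixes c :: "'a::comm_ring_1"
  assumes "inj ((*) c)"
  shows "Ass_quot J \<subseteq> Ass_quot ((*) c ` J)"
proof
  fix P
  assume "P \<in> Ass_quot J"
  then obtain f where P: "prime_ideal P" "P = {g. g * f \<in> J}"
    unfolding Ass_quot_def by auto
  have "g * f \<in> J \<longleftrightarrow> g * (c * f) \<in> (*) c ` J" for g
    using inj_image_mem_iff[OF assms] by (simp add: mult.left_commute)
  then show "P \<in> Ass_quot ((*) c ` J)"
    using P unfolding Ass_quot_def by auto
qed

lemma Ass_quot_image_mult_subset:
  fixes c :: "'a::comm_ring_1"
  assumes "inj ((*) c)"
  shows "Ass_quot ((*) c ` J) \<subseteq> Ass_quot J \<union> Ass_quot {g. c dvd g}"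
proof
  fix P
  assume "P \<in> Ass_quot ((*) c ` J)"
  then obtain f where P: "prime_ideal P" "P = {g. g * f \<in> (*) c ` J}"
    unfolding Ass_quot_def by auto
  \<comment> \<open>Either some r outside P moves f into cR, and then P is the colon ideal of J by f' with
    r f = c f', or no such r exists and P is the colon ideal of cR by f.\<close>
  show "P \<in> Ass_quot J \<union> Ass_quot {g. c dvd g}"
  proof (cases "\<exists>r f'. r \<notin> P \<and> r * f = c * f'")
    case True
    then obtain r f' where r: "r \<notin> P" "r * f = c * f'"
      by blast
    have "g \<in> P \<longleftrightarrow> g * f' \<in> J" for g
    proof -
      have "g \<in> P \<longleftrightarrow> g * r \<in> P"
        using P(1) r(1) unfolding prime_ideal_def is_ideal_def by (metis mult.commute)
      also have "\<dots> \<longleftrightarrow> c * (g * f') \<in> (*) c ` J"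
        using P(2) r(2) by (simp add: mult.assoc mult.left_commute)
      also have "\<dots> \<longleftrightarrow> g * f' \<in> J"
        using inj_image_mem_iff[OF assms] by simp
      finally show ?thesis .
    qed
    then show ?thesis
      using P(1) unfolding Ass_quot_def by blast
  next
    case False
    have "g \<in> P \<longleftrightarrow> c dvd g * f" for g
    proof
      assume "g \<in> P"
      then show "c dvd g * f"
        using P(2) by auto
    next
      assume "c dvd g * f"
      then obtain f' where "g * f = c * f'"
        by (rule dvdE)
      then show "g \<in> P"
        using False by blast
    qed
    then show ?thesis
      using P(1) unfolding Ass_quot_def by blast
  qed
qed

lemma lookup_mult_at_min_weight:
  fixes f g :: "'a::cancel_comm_monoid_add \<Rightarrow>\<^sub>0 'b::semiring_0"
    and \<rho> :: "'a \<Rightarrow> 'c::{ordered_cancel_comm_monoid_add, linorder}"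
  assumes inj: "inj \<rho>" and add: "\<And>a b. \<rho> (a + b) = \<rho> a + \<rho> b"
    and a0: "a0 \<in> Poly_Mapping.keys f" "\<And>a. a \<in> Poly_Mapping.keys f \<Longrightarrow> \<rho> a0 \<le> \<rho> a"
    and b0: "b0 \<in> Poly_Mapping.keys g" "\<And>b. b \<in> Poly_Mapping.keys g \<Longrightarrow> \<rho> b0 \<le> \<rho> b"
  shows "Poly_Mapping.lookup (f * g) (a0 + b0) = Poly_Mapping.lookup f a0 * Poly_Mapping.lookup g b0"
proof -
  have unique: "a = a0 \<and> b = b0"
    if "Poly_Mapping.lookup f a \<noteq> 0" "Poly_Mapping.lookup g b \<noteq> 0" "a0 + b0 = a + b" for a b
  proof -
    have sum: "\<rho> a + \<rho> b = \<rho> a0 + \<rho> b0"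
      using that(3) add by metis
    have "\<rho> a = \<rho> a0"
    proof (rule ccontr)
      assume "\<rho> a \<noteq> \<rho> a0"
      then have "\<rho> a0 < \<rho> a"
        using a0(2)[of a] that(1) by (auto simp: in_keys_iff order.order_iff_strict)
      then have "\<rho> a0 + \<rho> b0 < \<rho> a + \<rho> b"
        using b0(2) that(2) by (simp add: in_keys_iff add_less_le_mono)
      with sum show False
        by simp
    qed
    moreover from this sum have "\<rho> b = \<rho> b0"
      by simp
    ultimately show ?thesis
      using inj by (simp add: inj_eq)
  qed
  have "Poly_Mapping.lookup (f * g) (a0 + b0)
      = (\<Sum>(a, b). Poly_Mapping.lookup f a * Poly_Mapping.lookup g b when a0 + b0 = a + b)"
    by (simp add: times_poly_mapping.rep_eq prod_fun_unfold_prod)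
  also have "\<dots> = (\<Sum>ab. Poly_Mapping.lookup f a0 * Poly_Mapping.lookup g b0 when ab = (a0, b0))"
    by (rule Sum_any.cong) (auto simp: when_def split: if_split_asm dest!: mult_not_zero unique)
  also have "\<dots> = Poly_Mapping.lookup f a0 * Poly_Mapping.lookup g b0"
    by simp
  finally show ?thesis .
qed

text \<open>The x_v-adic order of f; a junk value (Min {}) for f = 0.\<close>
definition var_order :: "'v \<Rightarrow> ('v, 'k::zero) mpoly \<Rightarrow> nat" where
  "var_order v f = Min ((\<lambda>a. Poly_Mapping.lookup a v) ` Poly_Mapping.keys f)"

lemma var_order_le: "a \<in> Poly_Mapping.keys f \<Longrightarrow> var_order v f \<le> Poly_Mapping.lookup a v"
  unfolding var_order_def by simp

lemma var_order_attained:
  assumes "f \<noteq> 0"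
  shows "\<exists>a\<in>Poly_Mapping.keys f. Poly_Mapping.lookup a v = var_order v f"
proof -
  have "var_order v f \<in> (\<lambda>a. Poly_Mapping.lookup a v) ` Poly_Mapping.keys f"
    unfolding var_order_def using assms by (intro Min_in) auto
  then show ?thesis
    by auto
qed

lemma exists_weight_var_first:
  fixes v :: "'v::finite"
  obtains \<rho> :: "('v \<Rightarrow>\<^sub>0 nat) \<Rightarrow> nat \<Rightarrow>\<^sub>0 nat"
  where "inj \<rho>" "\<And>a b. \<rho> (a + b) = \<rho> a + \<rho> b"
    "\<And>a b. Poly_Mapping.lookup a v < Poly_Mapping.lookup b v \<Longrightarrow> \<rho> a < \<rho> b"
proof -
  obtain vs :: "'v list" where vs: "set vs = UNIV"
    using finite_list[OF finite_UNIV] by blast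
  \<comment> \<open>The lexicographic order on these weights compares the exponent of v first.\<close>
  define \<rho> :: "('v \<Rightarrow>\<^sub>0 nat) \<Rightarrow> nat \<Rightarrow>\<^sub>0 nat"
    where "\<rho> a = Poly_Mapping.nth (Poly_Mapping.lookup a v # map (Poly_Mapping.lookup a) vs)" for a
  have lookup_\<rho>: "Poly_Mapping.lookup (\<rho> a) n = (case n of 0 \<Rightarrow> Poly_Mapping.lookup a v
      | Suc i \<Rightarrow> if i < length vs then Poly_Mapping.lookup a (vs ! i) else 0)" for a n
    by (cases n) (simp_all add: \<rho>_def nth_default_def)
  have "inj \<rho>"
  proof (rule injI)
    fix a b
    assume "\<rho> a = \<rho> b"
    then have "Poly_Mapping.lookup a (vs ! i) = Poly_Mapping.lookup b (vs ! i)" if "i < length vs" for i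
      using that lookup_\<rho>[of a "Suc i"] lookup_\<rho>[of b "Suc i"] by simp
    then show "a = b"
      using vs by (metis in_set_conv_nth UNIV_I poly_mapping_eqI)
  qed
  moreover have "\<rho> (a + b) = \<rho> a + \<rho> b" for a b
    by (rule poly_mapping_eqI) (simp add: lookup_\<rho> lookup_add split: nat.split)
  moreover have "\<rho> a < \<rho> b" if "Poly_Mapping.lookup a v < Poly_Mapping.lookup b v" for a b
  proof -
    have "less_fun (Poly_Mapping.lookup (\<rho> a)) (Poly_Mapping.lookup (\<rho> b))"
      using that by (intro less_funI exI[of _ 0]) (simp add: lookup_\<rho>)
    then show ?thesis
      by (simp add: less_poly_mapping.rep_eq)
  qed
  ultimately show ?thesis
    by (rule that)
qed

lemma min_weight_key_var_order:
  fixes p :: "('v, 'k::zero) mpoly" and \<rho> :: "('v \<Rightarrow>\<^sub>0 nat) \<Rightarrow> 'c::linorder"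
  assumes \<rho>_less: "\<And>a b. Poly_Mapping.lookup a v < Poly_Mapping.lookup b v \<Longrightarrow> \<rho> a < \<rho> b"
    and p: "p \<noteq> 0"
  obtains a where "a \<in> Poly_Mapping.keys p" "Poly_Mapping.lookup a v = var_order v p"
    "\<And>b. b \<in> Poly_Mapping.keys p \<Longrightarrow> \<rho> a \<le> \<rho> b"
proof -
  define a where "a = arg_min_on \<rho> (Poly_Mapping.keys p)"
  have a: "a \<in> Poly_Mapping.keys p" "\<And>b. b \<in> Poly_Mapping.keys p \<Longrightarrow> \<rho> a \<le> \<rho> b"
    using p unfolding a_def by (auto intro: arg_min_if_finite(1) arg_min_least)
  obtain a1 where a1: "a1 \<in> Poly_Mapping.keys p" "Poly_Mapping.lookup a1 v = var_order v p"
    using var_order_attained[OF p] by blast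
  have "\<not> \<rho> a1 < \<rho> a"
    using a(2)[OF a1(1)] by (simp add: not_less)
  then have "\<not> Poly_Mapping.lookup a1 v < Poly_Mapping.lookup a v"
    using \<rho>_less by blast
  then have "Poly_Mapping.lookup a v = var_order v p"
    using var_order_le[OF a(1), of v] a1(2) by simp
  with a show ?thesis
    using that by blast
qed

lemma keys_mult_var_order:
  fixes f g :: "('v::finite, 'k::semiring_no_zero_divisors) mpoly"
  assumes "f \<noteq> 0" "g \<noteq> 0"
  obtains a b where "a \<in> Poly_Mapping.keys f" "b \<in> Poly_Mapping.keys g"
    "a + b \<in> Poly_Mapping.keys (f * g)"
    "Poly_Mapping.lookup a v = var_order v f" "Poly_Mapping.lookup b v = var_order v g"
proof -
  obtain \<rho> :: "('v \<Rightarrow>\<^sub>0 nat) \<Rightarrow> nat \<Rightarrow>\<^sub>0 nat" where \<rho>: "inj \<rho>" "\<And>a b. \<rho> (a + b) = \<rho> a + \<rho> b"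
    "\<And>a b. Poly_Mapping.lookup a v < Poly_Mapping.lookup b v \<Longrightarrow> \<rho> a < \<rho> b"
    using exists_weight_var_first[of v] by blast
  obtain a where a: "a \<in> Poly_Mapping.keys f" "Poly_Mapping.lookup a v = var_order v f"
      "\<And>a'. a' \<in> Poly_Mapping.keys f \<Longrightarrow> \<rho> a \<le> \<rho> a'"
    using min_weight_key_var_order[where \<rho> = \<rho> and v = v, OF \<rho>(3) assms(1)] by blast
  obtain b where b: "b \<in> Poly_Mapping.keys g" "Poly_Mapping.lookup b v = var_order v g"
      "\<And>b'. b' \<in> Poly_Mapping.keys g \<Longrightarrow> \<rho> b \<le> \<rho> b'"
    using min_weight_key_var_order[where \<rho> = \<rho> and v = v, OF \<rho>(3) assms(2)] by blast
  have "Poly_Mapping.lookup (f * g) (a + b) = Poly_Mapping.lookup f a * Poly_Mapping.lookup g b"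
    using a(1,3) b(1,3) by (rule lookup_mult_at_min_weight[OF \<rho>(1,2)])
  then have "a + b \<in> Poly_Mapping.keys (f * g)"
    using a(1) b(1) by (simp add: in_keys_iff)
  then show ?thesis
    by (rule that[OF a(1) b(1) _ a(2) b(2)])
qed

lemma mpoly_mult_eq_0_iff:
  fixes f g :: "('v::finite, 'k::semiring_no_zero_divisors) mpoly"
  shows "f * g = 0 \<longleftrightarrow> f = 0 \<or> g = 0"
proof (intro iffI)
  assume fg: "f * g = 0"
  show "f = 0 \<or> g = 0"
  proof (rule ccontr)
    assume "\<not> (f = 0 \<or> g = 0)"
    then obtain a b where "a + b \<in> Poly_Mapping.keys (f * g)"
      using keys_mult_var_order[of f g] by blast
    with fg show False
      by simp
  qed
qed auto

lemma var_order_mult: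
  fixes f g :: "('v::finite, 'k::semiring_no_zero_divisors) mpoly"
  assumes "f \<noteq> 0" "g \<noteq> 0"
  shows "var_order v (f * g) = var_order v f + var_order v g"
proof (rule antisym)
  obtain a b where "a + b \<in> Poly_Mapping.keys (f * g)"
      "Poly_Mapping.lookup a v = var_order v f" "Poly_Mapping.lookup b v = var_order v g"
    using keys_mult_var_order[OF assms] by blast
  then show "var_order v (f * g) \<le> var_order v f + var_order v g"
    using var_order_le[of "a + b" "f * g" v] by (simp add: lookup_add)
next
  have "f * g \<noteq> 0"
    using assms by (simp add: mpoly_mult_eq_0_iff)
  then obtain c where c: "c \<in> Poly_Mapping.keys (f * g)" "Poly_Mapping.lookup c v = var_order v (f * g)"
    using var_order_attained[of "f * g" v] by blast
  obtain a b where "c = a + b" "a \<in> Poly_Mapping.keys f" "b \<in> Poly_Mapping.keys g"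
    using keys_mult[of f g] c(1) by blast
  then show "var_order v f + var_order v g \<le> var_order v (f * g)"
    using c(2) var_order_le[of a f v] var_order_le[of b g v] by (simp add: lookup_add)
qed

lemma mpoly_power_ne_zero:
  fixes f :: "('v::finite, 'k::{semiring_no_zero_divisors, semiring_1}) mpoly"
  shows "f \<noteq> 0 \<Longrightarrow> f ^ n \<noteq> 0"
  by (induction n) (simp_all add: mpoly_mult_eq_0_iff)

lemma inj_mult_mpoly:
  fixes c :: "('v::finite, 'k::idom) mpoly"
  assumes "c \<noteq> 0"
  shows "inj ((*) c)"
proof (rule injI)
  fix x y
  assume "c * x = c * y"
  then have "c * (x - y) = 0"
    by (simp add: right_diff_distrib)
  then show "x = y"
    using assms by (simp add: mpoly_mult_eq_0_iff)
qed

lemma keys_monomial_of [simp]: "Poly_Mapping.keys (monomial_of a :: ('v, 'k::comm_ring_1) mpoly) = {a}"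
  by (simp add: monomial_of_def)

lemma monomial_of_ne_zero: "monomial_of a \<noteq> (0 :: ('v, 'k::comm_ring_1) mpoly)"
  by (metis keys_monomial_of keys_zero insert_not_empty)

lemma monomial_of_zero: "monomial_of 0 = (1 :: ('v, 'k::comm_ring_1) mpoly)"
  by (simp add: monomial_of_def)

lemma monomial_of_add: "monomial_of (a + b) = (monomial_of a * monomial_of b :: ('v, 'k::comm_ring_1) mpoly)"
  by (simp add: monomial_of_def mult_single)

lemma var_order_monomial_of [simp]: "var_order v (monomial_of a) = Poly_Mapping.lookup a v"
  by (simp add: var_order_def)

lemma is_monomial_power: "is_monomial (m :: ('v, 'k::comm_ring_1) mpoly) \<Longrightarrow> is_monomial (m ^ n)"
  unfolding is_monomial_def by (induction n) (auto simp flip: monomial_of_zero monomial_of_add)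

lemma var_order_power:
  fixes m :: "('v::finite, 'k::idom) mpoly"
  assumes "m \<noteq> 0"
  shows "var_order v (m ^ n) = n * var_order v m"
  by (induction n) (simp_all add: assms var_order_mult mpoly_power_ne_zero flip: monomial_of_zero)

lemma lookup_monomial_of_mult:
  "Poly_Mapping.lookup (monomial_of a * q) (a + c) = Poly_Mapping.lookup (q :: ('v, 'k::comm_ring_1) mpoly) c"
  by (simp add: monomial_of_def lookup_mult lookup_single when_mult Sum_any_when_equal)

lemma monomial_of_dvd:
  fixes g :: "('v, 'k::comm_ring_1) mpoly"
  assumes le: "\<And>b w. b \<in> Poly_Mapping.keys g \<Longrightarrow> Poly_Mapping.lookup a w \<le> Poly_Mapping.lookup b w"
  shows "monomial_of a dvd g"
proof -
  define q where "q = Abs_poly_mapping (\<lambda>c. Poly_Mapping.lookup g (a + c))"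
  have "{c. Poly_Mapping.lookup g (a + c) \<noteq> 0} = (+) a -` Poly_Mapping.keys g"
    by (auto simp: in_keys_iff)
  then have "finite {c. Poly_Mapping.lookup g (a + c) \<noteq> 0}"
    by (auto intro: finite_vimageI injI)
  then have lookup_q: "Poly_Mapping.lookup q c = Poly_Mapping.lookup g (a + c)" for c
    by (simp add: q_def)
  have "Poly_Mapping.lookup g b = Poly_Mapping.lookup (monomial_of a * q) b" for b
  proof (cases "b \<in> Poly_Mapping.keys g")
    case True
    then have "b = a + (b - a)"
      using le by (intro poly_mapping_eqI) (simp add: lookup_add lookup_minus)
    then show ?thesis
      by (metis lookup_monomial_of_mult lookup_q)
  next
    case False
    have "b \<notin> Poly_Mapping.keys (monomial_of a * q)"
    proof
      assume "b \<in> Poly_Mapping.keys (monomial_of a * q)"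
      then obtain c where "b = a + c" "c \<in> Poly_Mapping.keys q"
        using keys_mult[of "monomial_of a" q] by auto
      with False show False
        by (simp add: in_keys_iff lookup_q)
    qed
    with False show ?thesis
      by (simp add: in_keys_iff)
  qed
  then show ?thesis
    by (intro dvdI poly_mapping_eqI)
qed

lemma monomial_of_dvd_iff:
  fixes g :: "('v::finite, 'k::idom) mpoly"
  shows "monomial_of a dvd g \<longleftrightarrow> g = 0 \<or> (\<forall>w. Poly_Mapping.lookup a w \<le> var_order w g)"
proof
  assume "monomial_of a dvd g"
  then obtain q where g: "g = monomial_of a * q"
    by (rule dvdE)
  show "g = 0 \<or> (\<forall>w. Poly_Mapping.lookup a w \<le> var_order w g)"
  proof (cases "q = 0")
    case False
    then have "var_order w g = Poly_Mapping.lookup a w + var_order w q" for w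
      using g by (simp add: var_order_mult monomial_of_ne_zero)
    then show ?thesis
      by simp
  qed (simp add: g)
next
  assume "g = 0 \<or> (\<forall>w. Poly_Mapping.lookup a w \<le> var_order w g)"
  then show "monomial_of a dvd g"
  proof
    assume le: "\<forall>w. Poly_Mapping.lookup a w \<le> var_order w g"
    show ?thesis
    proof (rule monomial_of_dvd)
      fix b w
      assume "b \<in> Poly_Mapping.keys g"
      then show "Poly_Mapping.lookup a w \<le> Poly_Mapping.lookup b w"
        using le var_order_le[of b g w] by (meson order_trans)
    qed
  qed simp
qed

definition var_ideal :: "'v \<Rightarrow> ('v, 'k::comm_ring_1) mpoly set" where
  "var_ideal v = {g. monomial_of (Poly_Mapping.single v 1) dvd g}"

lemma mem_var_ideal_iff:
  fixes g :: "('v::finite, 'k::idom) mpoly"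
  shows "g \<in> var_ideal v \<longleftrightarrow> g = 0 \<or> 0 < var_order v g"
proof -
  have "(\<forall>w. Poly_Mapping.lookup (Poly_Mapping.single v 1) w \<le> var_order w g) \<longleftrightarrow> 0 < var_order v g"
  proof
    assume "\<forall>w. Poly_Mapping.lookup (Poly_Mapping.single v 1) w \<le> var_order w g"
    then show "0 < var_order v g"
      by (metis lookup_single_eq One_nat_def Suc_le_eq)
  qed (simp add: lookup_single when_def)
  then show ?thesis
    unfolding var_ideal_def monomial_of_dvd_iff by simp
qed

lemma prime_ideal_var_ideal: "prime_ideal (var_ideal v :: ('v::finite, 'k::idom) mpoly set)"
  unfolding prime_ideal_def
proof (intro conjI allI impI)
  show "is_ideal (var_ideal v :: ('v, 'k) mpoly set)"
    unfolding is_ideal_def var_ideal_def by (auto intro: dvd_add)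
  show "var_ideal v \<noteq> (UNIV :: ('v, 'k) mpoly set)"
    using mem_var_ideal_iff[of 1 v] by (auto simp: monomial_of_ne_zero simp flip: monomial_of_zero)
next
  fix f g :: "('v, 'k) mpoly"
  assume "f * g \<in> var_ideal v"
  then show "f \<in> var_ideal v \<or> g \<in> var_ideal v"
    by (cases "f = 0 \<or> g = 0") (auto simp: mem_var_ideal_iff mpoly_mult_eq_0_iff var_order_mult)
qed

lemma var_ideal_in_Ass_quot:
  fixes J :: "('v::finite, 'k::idom) mpoly set"
  assumes J: "is_ideal J" "J \<noteq> {0}" "J \<subseteq> var_ideal v"
  shows "var_ideal v \<in> Ass_quot J"
proof -
  obtain j0 where "j0 \<in> J" "j0 \<noteq> 0"
    using J(1,2) unfolding is_ideal_def by blast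
  then obtain j where j: "j \<in> J" "j \<noteq> 0"
    and j_min: "\<And>y. y \<in> J \<Longrightarrow> y \<noteq> 0 \<Longrightarrow> var_order v j \<le> var_order v y"
    using ex_has_least_nat[of "\<lambda>y. y \<in> J \<and> y \<noteq> 0" j0 "var_order v"] by blast
  obtain f where jf: "j = monomial_of (Poly_Mapping.single v 1) * f"
    using j(1) J(3) unfolding var_ideal_def by (auto elim: dvdE)
  have f: "f \<noteq> 0"
    using j(2) jf mult_zero_right by metis
  have order_j: "var_order v j = Suc (var_order v f)"
    using jf f by (simp add: var_order_mult monomial_of_ne_zero)
  have "g \<in> var_ideal v \<longleftrightarrow> g * f \<in> J" for g
  proof
    assume "g \<in> var_ideal v"
    then obtain q where "g = monomial_of (Poly_Mapping.single v 1) * q"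
      unfolding var_ideal_def by (auto elim: dvdE)
    then have "g * f = q * j"
      using jf by (simp add: mult_ac)
    then show "g * f \<in> J"
      using j(1) J(1) unfolding is_ideal_def by simp
  next
    assume gf: "g * f \<in> J"
    show "g \<in> var_ideal v"
    proof (cases "g = 0")
      case False
      then have "var_order v j \<le> var_order v (g * f)"
        using j_min gf f by (simp add: mpoly_mult_eq_0_iff)
      then have "0 < var_order v g"
        using order_j False f by (simp add: var_order_mult)
      then show ?thesis
        by (simp add: mem_var_ideal_iff)
    qed (simp add: mem_var_ideal_iff)
  qed
  then show ?thesis
    using prime_ideal_var_ideal unfolding Ass_quot_def by blast
qed

lemma monomial_of_single_power:
  "monomial_of (Poly_Mapping.single v n) = (monomial_of (Poly_Mapping.single v 1) ^ n :: ('v, 'k::comm_ring_1) mpoly)"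
proof (induction n)
  case 0
  then show ?case
    by (simp add: monomial_of_zero)
next
  case (Suc n)
  have "Poly_Mapping.single v (Suc n) = Poly_Mapping.single v 1 + Poly_Mapping.single v n"
    by (simp flip: single_add)
  then show ?case
    using Suc by (simp add: monomial_of_add)
qed

lemma prime_ideal_eq_var_ideal:
  fixes P :: "('v::finite, 'k::idom) mpoly set"
  assumes P: "prime_ideal P" "P \<subseteq> var_ideal v" "monomial_of a \<in> P"
  shows "P = var_ideal v"
proof
  define n where "n = Poly_Mapping.lookup a v"
  define a' where "a' = a - Poly_Mapping.single v n"
  have "a = a' + Poly_Mapping.single v n"
    by (rule poly_mapping_eqI) (simp add: a'_def n_def lookup_add lookup_minus lookup_single when_def)
  then have split: "monomial_of a = monomial_of a' * monomial_of (Poly_Mapping.single v 1) ^ n"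
    by (metis monomial_of_add monomial_of_single_power)
  have "monomial_of a' \<notin> P"
    using P(2) monomial_of_ne_zero by (force simp: mem_var_ideal_iff a'_def n_def lookup_minus)
  then have "monomial_of (Poly_Mapping.single v 1) ^ n \<in> P"
    using P(1,3) split unfolding prime_ideal_def by metis
  then have "monomial_of (Poly_Mapping.single v 1) \<in> P"
    by (rule power_in_prime_ideal[OF P(1)])
  then show "var_ideal v \<subseteq> P"
    using P(1) unfolding var_ideal_def prime_ideal_def is_ideal_def by (auto elim!: dvdE simp: mult.commute)
qed (rule P(2))

lemma Ass_quot_monomial_principal:
  fixes m :: "('v::finite, 'k::idom) mpoly"
  assumes "is_monomial m" "P \<in> Ass_quot {g. m dvd g}"
  shows "\<exists>v. 0 < var_order v m \<and> P = var_ideal v"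
proof -
  obtain a where m: "m = monomial_of a"
    using assms(1) unfolding is_monomial_def by blast
  obtain f where P: "prime_ideal P" "P = {g. m dvd g * f}"
    using assms(2) unfolding Ass_quot_def by auto
  have "\<not> m dvd f"
    using one_notin_prime_ideal[OF P(1)] P(2) by simp
  then obtain v where v: "var_order v f < Poly_Mapping.lookup a v" and f: "f \<noteq> 0"
    unfolding m monomial_of_dvd_iff by (auto simp: not_le)
  have "P \<subseteq> var_ideal v"
  proof
    fix g
    assume "g \<in> P"
    then have gf: "m dvd g * f"
      using P(2) by simp
    show "g \<in> var_ideal v"
    proof (cases "g = 0")
      case False
      then have "Poly_Mapping.lookup a v \<le> var_order v (g * f)"
        using gf f unfolding m monomial_of_dvd_iff by (auto simp: mpoly_mult_eq_0_iff)
      then show ?thesis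
        using v False f by (simp add: var_order_mult mem_var_ideal_iff)
    qed (simp add: mem_var_ideal_iff)
  qed
  moreover have "monomial_of a \<in> P"
    using P(2) m by simp
  ultimately have "P = var_ideal v"
    by (rule prime_ideal_eq_var_ideal[OF P(1)])
  with v show ?thesis
    unfolding m by (intro exI[of _ v]) simp
qed

lemma ideal_pow_ne_zero:
  fixes I :: "('v::finite, 'k::idom) mpoly set"
  assumes "is_ideal I" "I \<noteq> {0}"
  shows "ideal_pow I k \<noteq> {0}"
proof -
  obtain u where "u \<in> I" "u \<noteq> 0"
    using assms unfolding is_ideal_def by blast
  then have "u ^ k \<in> ideal_pow I k" "u ^ k \<noteq> 0"
    by (simp_all add: power_in_ideal_pow mpoly_power_ne_zero)
  then show ?thesis
    by blast
qed

lemma Ass_quot_ideal_pow_monomial_times: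
  fixes I :: "('v::finite, 'k::idom) mpoly set"
  assumes I: "is_ideal I" "I \<noteq> {0}" and h: "is_monomial h" and k: "0 < k"
  shows "Ass_quot (ideal_pow (elt_times_ideal h I) k)
    = Ass_quot (ideal_pow I k) \<union> {var_ideal v | v. 0 < var_order v h}"
proof -
  have h0: "h \<noteq> 0"
    using h monomial_of_ne_zero unfolding is_monomial_def by metis
  have hk0: "h ^ k \<noteq> 0"
    using h0 by (rule mpoly_power_ne_zero)
  have pow: "ideal_pow (elt_times_ideal h I) k = (*) (h ^ k) ` ideal_pow I k"
    by (simp add: elt_times_ideal_eq_image[OF I(1)] ideal_pow_image_mult)
  have inj: "inj ((*) (h ^ k))"
    using hk0 by (rule inj_mult_mpoly)
  have order: "0 < var_order v (h ^ k) \<longleftrightarrow> 0 < var_order v h" for v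
    using k h0 by (simp add: var_order_power)
  have "Ass_quot ((*) (h ^ k) ` ideal_pow I k)
      \<subseteq> Ass_quot (ideal_pow I k) \<union> {var_ideal v | v. 0 < var_order v h}"
    using Ass_quot_image_mult_subset[OF inj] Ass_quot_monomial_principal[OF is_monomial_power[OF h]] order
    by blast
  moreover have "Ass_quot (ideal_pow I k) \<subseteq> Ass_quot ((*) (h ^ k) ` ideal_pow I k)"
    using inj by (rule Ass_quot_subset_image_mult)
  moreover have "var_ideal v \<in> Ass_quot ((*) (h ^ k) ` ideal_pow I k)" if v: "0 < var_order v h" for v
  proof (rule var_ideal_in_Ass_quot)
    show "is_ideal ((*) (h ^ k) ` ideal_pow I k)"
      by (intro is_ideal_image_mult is_ideal_ideal_pow)
    obtain u where "u \<in> ideal_pow I k" "u \<noteq> 0"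
      using ideal_pow_ne_zero[OF I] is_ideal_ideal_pow[of I k] unfolding is_ideal_def by blast
    then have "h ^ k * u \<in> (*) (h ^ k) ` ideal_pow I k" "h ^ k * u \<noteq> 0"
      using hk0 by (simp_all add: mpoly_mult_eq_0_iff)
    then show "(*) (h ^ k) ` ideal_pow I k \<noteq> {0}"
      by blast
    have "h ^ k \<in> var_ideal v"
      using order v by (simp add: mem_var_ideal_iff)
    then show "(*) (h ^ k) ` ideal_pow I k \<subseteq> var_ideal v"
      unfolding var_ideal_def by (auto intro: dvd_mult2)
  qed
  ultimately show ?thesis
    unfolding pow by blast
qed

lemma var_ideal_in_Ass_quot_ideal_pow_SucD:
  fixes I :: "('v::finite, 'k::idom) mpoly set"
  assumes "is_ideal I" "I \<noteq> {0}" "var_ideal v \<in> Ass_quot (ideal_pow I (Suc k))" "0 < k"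
  shows "var_ideal v \<in> Ass_quot (ideal_pow I k)"
proof (rule var_ideal_in_Ass_quot)
  have "ideal_pow I k \<subseteq> I"
    using ideal_pow_Suc_subset[OF assms(1), of "k - 1"] assms(4) by simp
  also have "I \<subseteq> var_ideal v"
    using subset_if_in_Ass_quot_ideal_pow[OF assms(1,3)] by simp
  finally show "ideal_pow I k \<subseteq> var_ideal v" .
qed (use assms in \<open>simp_all add: is_ideal_ideal_pow ideal_pow_ne_zero\<close>)

lemma copersistence_iff_Ass_quot_eq_Un:
  fixes I J :: "'a::comm_ring_1 set"
  assumes Ass_J: "\<And>k. 1 \<le> k \<Longrightarrow> Ass_quot (ideal_pow J k) = Ass_quot (ideal_pow I k) \<union> S"
    and Ass_I: "\<And>k. 1 \<le> k \<Longrightarrow> S \<inter> Ass_quot (ideal_pow I (Suc k)) \<subseteq> Ass_quot (ideal_pow I k)"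
  shows "copersistence I \<longleftrightarrow> copersistence J"
proof -
  have "Ass_quot (ideal_pow I (Suc k)) \<subseteq> Ass_quot (ideal_pow I k) \<longleftrightarrow>
      Ass_quot (ideal_pow J (Suc k)) \<subseteq> Ass_quot (ideal_pow J k)" if k: "1 \<le> k" for k
    using Ass_I[OF k] unfolding Ass_J[OF k] Ass_J[OF le_SucI[OF k]] by blast
  then show ?thesis
    unfolding copersistence_def by blast
qed

theorem proposition3p7:
  fixes I :: "('v::finite, 'k::field) mpoly set" and h :: "('v, 'k) mpoly"
  assumes "monomial_ideal I" and "is_monomial h"
  shows "copersistence I \<longleftrightarrow> copersistence (elt_times_ideal h I)"
proof -
  have I: "is_ideal I"
    using assms(1) is_ideal_ideal_gen unfolding monomial_ideal_def by auto
  show ?thesis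
  proof (cases "I = {0}")
    case True
    then have "elt_times_ideal h I = I"
      using elt_times_ideal_eq_image[OF I, of h] by simp
    then show ?thesis
      by simp
  next
    case False
    show ?thesis
    proof (rule copersistence_iff_Ass_quot_eq_Un)
      show "Ass_quot (ideal_pow (elt_times_ideal h I) k)
          = Ass_quot (ideal_pow I k) \<union> {var_ideal v | v. 0 < var_order v h}" if "1 \<le> k" for k
        using that Ass_quot_ideal_pow_monomial_times[OF I False assms(2)] by simp
      show "{var_ideal v | v. 0 < var_order v h} \<inter> Ass_quot (ideal_pow I (Suc k))
          \<subseteq> Ass_quot (ideal_pow I k)" if "1 \<le> k" for k
        using that var_ideal_in_Ass_quot_ideal_pow_SucD[OF I False] by auto
    qed
  qed
qed

end
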